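(* Let $g\in C^{\omega}(\mathbb{R})$ satisfy: $g(v)>0$, $g'(v)\ge0$ and $\frac{d^2}{dv^2}(v^2g(v^2))>0$ for all $v>0$, and $\lim_{v\to\infty}v\,g(v^2)=\infty$. Then the set of all $\beta>0$ for which the toy model has a toy steady tip growth solution is a closed subset of $\mathbb{R}_{>0}$ with empty interior.
   Context: Toy model: for a real-analytic $g:\mathbb{R}\to\mathbb{R}$ with $g(v)>0$ for $v>0$ and a parameter $\beta$, the toy model is the planar ODE (prime denotes $d/ds$) $$\rho'=\frac32\,\frac{1-\rho^2}{r}\left(-1+\frac{\sqrt{1-\rho^2}\,\big(\beta r^2 g(r^2)+\rho\big)}{r}\right),\qquad r'=\rho,$$ on $M_0=(-1,1)\times\mathbb{R}_{>0}$. For a solution $(\rho,r)$ defined on an interval $(0,s_{\max})$: (S1) $\lim_{s\to0^+}\rho=1$, $\lim_{s\to0^+}r=0$, $\lim_{s\to0^+}\sqrt{1-\rho^2}/r=\eta_0>0$; (S2) there exist $s_0>0$ and real-analytic $G:(-a,a)\to\mathbb{R}_{>0}$, $a=r(s_0)^2$, with $\rho(s)=G(r(s)^2)$ for $s\in(0,s_0)$; (S3) the solution is defined on $(0,\infty)$ with $\rho'(s)<0$, $\rho(s)>0$ for all $s>0$; (S4) $\lim_{s\to\infty}\rho=0$, $\lim_{s\to\infty}r=r_\infty>0$. A toy steady tip growth solution is a solution satisfying (S1)–(S4). *)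

theory Defs
  imports "HOL-Analysis.Analysis"
begin

definition real_analytic_on :: "(real \<Rightarrow> real) \<Rightarrow> real set \<Rightarrow> bool" where
  "real_analytic_on f S \<longleftrightarrow>
     (\<forall>x\<in>S. \<exists>\<delta>>0. \<exists>c::nat \<Rightarrow> real. ball x \<delta> \<subseteq> S \<and>
        (\<forall>y\<in>ball x \<delta>. (\<lambda>n. c n * (y - x) ^ n) sums f y))"

definition toy_rhs :: "(real \<Rightarrow> real) \<Rightarrow> real \<Rightarrow> real \<Rightarrow> real \<Rightarrow> real" where
  "toy_rhs g \<beta> \<rho> r =
     3/2 * (1 - \<rho>\<^sup>2) / r * (-1 + sqrt (1 - \<rho>\<^sup>2) * (\<beta> * r\<^sup>2 * g (r\<^sup>2) + \<rho>) / r)"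

definition toy_steady_tip_growth :: "(real \<Rightarrow> real) \<Rightarrow> real \<Rightarrow> (real \<Rightarrow> real) \<Rightarrow> (real \<Rightarrow> real) \<Rightarrow> bool" where
  "toy_steady_tip_growth g \<beta> \<rho> r \<longleftrightarrow>
     (\<forall>s>0. -1 < \<rho> s \<and> \<rho> s < 1 \<and> r s > 0 \<and>
        (\<rho> has_real_derivative toy_rhs g \<beta> (\<rho> s) (r s)) (at s) \<and>
        (r has_real_derivative \<rho> s) (at s)) \<and>
     \<comment> \<open>(S1)\<close>
     (\<rho> \<longlongrightarrow> 1) (at_right 0) \<and> (r \<longlongrightarrow> 0) (at_right 0) \<and>
     (\<exists>\<eta>0>0. ((\<lambda>s. sqrt (1 - (\<rho> s)\<^sup>2) / r s) \<longlongrightarrow> \<eta>0) (at_right 0)) \<and>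
     \<comment> \<open>(S2)\<close>
     (\<exists>s0>0. \<exists>G. real_analytic_on G {-((r s0)\<^sup>2)<..<(r s0)\<^sup>2} \<and>
        (\<forall>v\<in>{-((r s0)\<^sup>2)<..<(r s0)\<^sup>2}. G v > 0) \<and>
        (\<forall>s\<in>{0<..<s0}. \<rho> s = G ((r s)\<^sup>2))) \<and>
     \<comment> \<open>(S3)\<close>
     (\<forall>s>0. deriv \<rho> s < 0 \<and> \<rho> s > 0) \<and>
     \<comment> \<open>(S4)\<close>
     (\<rho> \<longlongrightarrow> 0) at_top \<and> (\<exists>r_inf>0. (r \<longlongrightarrow> r_inf) at_top)"

end

theory Submission
  imports Defs
begin

text \<open>At most one \<open>\<beta>\<close> admits a toy steady tip growth solution, so the set in question
  is empty or a single point. Write a solution as a graph \<open>\<rho> = P r\<close> on \<open>0 < r < R\<close>,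
  \<open>R = r \<infinity>\<close>. At the tip, L'Hopital's rule forces \<open>sqrt (1 - \<rho>\<^sup>2) / r \<rightarrow> 1/3\<close>, hence
  \<open>(1 - P r) / r\<^sup>2 \<rightarrow> 1/18\<close> whatever \<open>\<beta>\<close> is; at infinity \<open>\<rho>' \<rightarrow> 0\<close> forces
  \<open>\<beta> R g (R\<^sup>2) = 1\<close>, so a larger \<open>\<beta>\<close> gives a smaller \<open>R\<close>. For \<open>\<beta>\<^sub>1 < \<beta>\<^sub>2\<close> the slope
  \<open>d\<rho>/dr\<close> is increasing in \<open>\<beta>\<close>, so \<open>P\<^sub>2 - P\<^sub>1\<close>, negative near \<open>R\<^sub>2\<close>, can never cross zero
  upwards and is negative on \<open>(0, R\<^sub>2)\<close>. Near the tip a one-sided Lipschitz bound on the slope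
  gives \<open>(P\<^sub>2 - P\<^sub>1)' > 2 (P\<^sub>2 - P\<^sub>1) / r\<close>, so \<open>(P\<^sub>2 - P\<^sub>1) / r\<^sup>2\<close> increases from its limit
  \<open>1/18 - 1/18 = 0\<close> and \<open>P\<^sub>2 - P\<^sub>1\<close> would be positive.\<close>

section \<open>Elementary real analysis\<close>

lemma real_analytic_on_has_real_derivative:
  assumes "real_analytic_on f S" "x \<in> S"
  shows "(f has_real_derivative deriv f x) (at x)"
proof -
  obtain \<delta> c where \<delta>: "\<delta> > 0" "ball x \<delta> \<subseteq> S"
    and sums: "\<And>y. y \<in> ball x \<delta> \<Longrightarrow> (\<lambda>n. c n * (y - x) ^ n) sums f y"
    using assms unfolding real_analytic_on_def by blast
  define h where "h z = (\<Sum>n. c n * z ^ n)" for z :: real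
  have "summable (\<lambda>n. c n * z ^ n)" if "norm z < \<delta>" for z
    using sums[of "x + z"] that by (simp add: dist_norm sums_iff)
  then have "(h has_real_derivative (\<Sum>n. diffs c n * 0 ^ n)) (at 0)"
    unfolding h_def by (intro termdiffs_strong'[of \<delta>]) (use \<delta> in auto)
  then obtain D where "(h has_real_derivative D) (at 0)" ..
  then have "((\<lambda>y. h (y - x)) has_real_derivative D * 1) (at x)"
    by (intro DERIV_chain2[where f=h]) (auto intro!: derivative_eq_intros)
  moreover have "h (y - x) = f y" if "y \<in> ball x \<delta>" for y
    using sums[OF that] unfolding h_def by (simp add: sums_iff)
  ultimately have f_deriv: "(f has_real_derivative D * 1) (at x)"
    using has_field_derivative_transform_within_open[where S="ball x \<delta>"] \<delta>(1) by simp
  then have "deriv f x = D * 1"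
    by (rule DERIV_imp_deriv)
  with f_deriv show ?thesis
    by simp
qed

lemma eventually_at_right_0I:
  assumes "\<And>s::real. s > 0 \<Longrightarrow> P s"
  shows "eventually P (at_right 0)"
  using assms by (intro eventually_at_rightI[where b="1::real"]) auto

lemma DERIV_tendsto_at_top_eq_0:
  fixes f f' :: "real \<Rightarrow> real"
  assumes der: "\<And>s. s > 0 \<Longrightarrow> (f has_real_derivative f' s) (at s)"
    and f: "(f \<longlongrightarrow> a) at_top" and f': "(f' \<longlongrightarrow> L) at_top"
  shows "L = 0"
proof (rule ccontr)
  assume "L \<noteq> 0"
  then have e: "\<bar>L\<bar>/2 > 0" by simp
  have "((\<lambda>s. f (1 + s) - f s) \<longlongrightarrow> a - a) at_top"
    using filterlim_tendsto_add_at_top[OF tendsto_const filterlim_ident, of 1]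
    by (intro tendsto_intros f filterlim_compose[OF f])
  then have "eventually (\<lambda>s. \<bar>f (1 + s) - f s\<bar> < \<bar>L\<bar>/2) at_top"
    using tendstoD[OF _ e] by (force simp: dist_real_def)
  moreover have "eventually (\<lambda>s. \<bar>f' s - L\<bar> < \<bar>L\<bar>/2) at_top"
    using tendstoD[OF f' e] by (simp add: dist_real_def)
  ultimately have "eventually (\<lambda>s. \<bar>f (1 + s) - f s\<bar> < \<bar>L\<bar>/2 \<and> \<bar>f' s - L\<bar> < \<bar>L\<bar>/2) at_top"
    by (rule eventually_conj)
  then obtain T where T: "\<And>s. s \<ge> T \<Longrightarrow> \<bar>f (1 + s) - f s\<bar> < \<bar>L\<bar>/2 \<and> \<bar>f' s - L\<bar> < \<bar>L\<bar>/2"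
    unfolding eventually_at_top_linorder by blast
  define s where "s = max T 1"
  obtain z where "s < z" "f (1 + s) - f s = (1 + s - s) * f' z"
    using MVT2[of s "1 + s" f f'] der s_def by fastforce
  moreover have "\<bar>f' z\<bar> < \<bar>L\<bar>/2" "\<bar>f' z - L\<bar> < \<bar>L\<bar>/2"
    using T[of s] T[of z] s_def calculation by auto
  ultimately show False by linarith
qed

lemma pos_if_DERIV_pos_tendsto_0:
  fixes w w' :: "real \<Rightarrow> real"
  assumes der: "\<And>x. 0 < x \<Longrightarrow> x < b \<Longrightarrow> (w has_real_derivative w' x) (at x)"
    and pos: "\<And>x. 0 < x \<Longrightarrow> x < b \<Longrightarrow> w' x > 0"
    and lim: "(w \<longlongrightarrow> 0) (at_right 0)" and x: "0 < x" "x < b"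
  shows "w x > 0"
proof -
  have less: "w y < w z" if "0 < y" "y < z" "z < b" for y z
    using DERIV_pos_imp_increasing[of y z w] der pos that by force
  have "eventually (\<lambda>y. w y \<le> w (x/2)) (at_right 0)"
    unfolding eventually_at_right[OF x(1)] using x
    by (intro exI[of _ "x/2"]) (auto intro!: less_imp_le[OF less])
  then have "0 \<le> w (x/2)"
    using tendsto_upperbound[OF lim] by simp
  also have "w (x/2) < w x"
    using less x by simp
  finally show ?thesis .
qed

lemma pos_if_DERIV_gt_two_div:
  fixes D D' :: "real \<Rightarrow> real"
  assumes der: "\<And>x. 0 < x \<Longrightarrow> x < b \<Longrightarrow> (D has_real_derivative D' x) (at x)"
    and gt: "\<And>x. 0 < x \<Longrightarrow> x < b \<Longrightarrow> D' x > 2 / x * D x"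
    and lim: "((\<lambda>x. D x / x\<^sup>2) \<longlongrightarrow> 0) (at_right 0)" and x: "0 < x" "x < b"
  shows "D x > 0"
proof -
  have "D x / x\<^sup>2 > 0"
  proof (rule pos_if_DERIV_pos_tendsto_0[OF _ _ lim x])
    fix y :: real assume y: "0 < y" "y < b"
    show "((\<lambda>x. D x / x\<^sup>2) has_real_derivative (D' y * y - 2 * D y) / y^3) (at y)"
      using der[OF y] y
      by (auto intro!: derivative_eq_intros simp: field_simps power2_eq_square power3_eq_cube)
    show "(D' y * y - 2 * D y) / y^3 > 0"
      using gt[OF y] y by (simp add: field_simps)
  qed
  then show ?thesis
    using x by (simp add: zero_less_divide_iff)
qed

lemma neg_if_DERIV_pos_at_zeros:
  fixes f f' :: "real \<Rightarrow> real"
  assumes der: "\<And>x. a < x \<Longrightarrow> x < b \<Longrightarrow> (f has_real_derivative f' x) (at x)"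
    and zero: "\<And>x. a < x \<Longrightarrow> x < b \<Longrightarrow> f x = 0 \<Longrightarrow> f' x > 0"
    and near_b: "eventually (\<lambda>x. f x < 0) (at_left b)"
    and x0: "a < x0" "x0 < b"
  shows "f x0 < 0"
proof (rule ccontr)
  assume "\<not> f x0 < 0"
  obtain c where c: "x0 < c" "c < b" "f c < 0"
  proof -
    obtain c0 where "c0 < b" "\<And>y. c0 < y \<Longrightarrow> y < b \<Longrightarrow> f y < 0"
      using near_b x0 by (auto simp: eventually_at_left)
    then show ?thesis
      using that[of "(max c0 x0 + b) / 2"] x0 by auto
  qed
  have cont: "continuous_on {x0..c} f"
    using c x0 by (intro continuous_at_imp_continuous_on ballI DERIV_isCont[OF der]) auto
  define T where "T = {x0..c} \<inter> f -` {0..}"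
  have "closed T"
    unfolding T_def by (intro continuous_closed_preimage cont) auto
  moreover have "x0 \<in> T" "bdd_above T"
    using \<open>\<not> f x0 < 0\<close> c by (auto simp: T_def)
  ultimately have zT: "Sup T \<in> T"
    by (intro closed_contains_Sup) auto
  define z where "z = Sup T"
  have upper: "y \<le> z" if "y \<in> T" for y
    unfolding z_def by (rule cSup_upper[OF that \<open>bdd_above T\<close>])
  have z: "x0 \<le> z" "z < c" "f z \<ge> 0"
    using zT c unfolding z_def T_def by (auto simp: order.order_iff_strict)
  have zab: "a < z" "z < b"
    using z x0 c by auto
  show False
  proof (cases "f z = 0")
    case True
    obtain d where "d > 0" and d: "\<And>h. h > 0 \<Longrightarrow> h < d \<Longrightarrow> f z < f (z + h)"
      using DERIV_pos_inc_right[OF der[OF zab] zero[OF zab True]] by blast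
    define h where "h = min (d/2) (c - z)"
    have "h > 0" "h < d" "z + h \<le> c"
      using \<open>d > 0\<close> z unfolding h_def by auto
    then have "z + h \<in> T"
      using d[of h] z True by (auto simp: T_def)
    then show False
      using upper \<open>h > 0\<close> by fastforce
  next
    case False
    have "continuous_on {z..c} f"
      using z by (intro continuous_on_subset[OF cont]) auto
    then obtain y where "z \<le> y" "y \<le> c" "f y = 0"
      using IVT2'[of f c 0 z] c z False by auto
    then show False
      using upper[of y] z False by (auto simp: T_def)
  qed
qed

lemma DERIV_pos_image_eq:
  fixes r r' :: "real \<Rightarrow> real"
  assumes der: "\<And>s. s > 0 \<Longrightarrow> (r has_real_derivative r' s) (at s)"
    and pos: "\<And>s. s > 0 \<Longrightarrow> r' s > 0"
    and r0: "(r \<longlongrightarrow> 0) (at_right 0)" and rR: "(r \<longlongrightarrow> R) at_top"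
  shows "strict_mono_on {0<..} r" and "r ` {0<..} = {0<..<R}"
proof -
  show mono: "strict_mono_on {0<..} r"
    using DERIV_pos_imp_increasing[of _ _ r] der pos
    by (intro strict_mono_onI) (metis greaterThan_iff order.strict_trans2)
  then have less_iff: "r s < r t \<longleftrightarrow> s < t" if "s > 0" "t > 0" for s t
    using strict_mono_on_less that by auto
  have "0 < r s \<and> r s < R" if "s > 0" for s
  proof -
    have "eventually (\<lambda>t. r t \<le> r (s/2)) (at_right 0)"
      unfolding eventually_at_right[OF that] using that
      by (intro exI[of _ "s/2"]) (auto simp: less_iff less_imp_le)
    then have "0 \<le> r (s/2)"
      using tendsto_upperbound[OF r0] by simp
    moreover have "eventually (\<lambda>t. r (s + 1) \<le> r t) at_top"
      unfolding eventually_at_top_linorder using that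
      by (intro exI[of _ "s + 1"]) (auto simp: le_less less_iff)
    then have "r (s + 1) \<le> R"
      using tendsto_lowerbound[OF rR] by simp
    ultimately show ?thesis
      using less_iff[of "s/2" s] less_iff[of s "s + 1"] that by auto
  qed
  moreover have "x \<in> r ` {0<..}" if x: "0 < x" "x < R" for x
  proof -
    have "eventually (\<lambda>t. t > 0 \<and> r t < x) (at_right 0)"
      using eventually_at_right_less order_tendstoD(2)[OF r0 x(1)] by eventually_elim auto
    then obtain t0 where t0: "t0 > 0" "r t0 < x"
      using eventually_happens'[OF trivial_limit_at_right_real] by blast
    obtain N where N: "\<And>t. t \<ge> N \<Longrightarrow> x < r t"
      using order_tendstoD(1)[OF rR x(2)] by (auto simp: eventually_at_top_linorder)
    have "isCont r s" if "s > 0" for s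
      using der[OF that] by (rule DERIV_isCont)
    then obtain s where "t0 \<le> s" "r s = x"
      using IVT[of r t0 x "max N t0"] N[of "max N t0"] t0 by force
    then show ?thesis
      using t0 by force
  qed
  ultimately show "r ` {0<..} = {0<..<R}"
    by auto
qed

lemma strict_mono_on_inverse_limits:
  fixes r :: "real \<Rightarrow> real"
  assumes mono: "strict_mono_on {0<..} r" and image: "r ` {0<..} = {0<..<R}"
  defines "\<phi> \<equiv> the_inv_into {0<..} r"
  shows "filterlim \<phi> (at_right 0) (at_right 0)" and "filterlim \<phi> at_top (at_left R)"
proof -
  have inj: "inj_on r {0<..}"
    using mono by (rule strict_mono_on_imp_inj_on)
  have \<phi>: "\<phi> x > 0" "r (\<phi> x) = x" if "0 < x" "x < R" for x
    using the_inv_into_into[OF inj, of x] f_the_inv_into_f[OF inj, of x] image that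
    unfolding \<phi>_def by auto
  have \<phi>_less: "\<phi> x < a \<longleftrightarrow> x < r a" if "0 < x" "x < R" "a > 0" for x a
    using strict_mono_on_less[OF mono, of "\<phi> x" a] \<phi>[OF that(1,2)] that(3) by simp
  have range: "0 < r s" "r s < R" if "s > 0" for s
    using image that by auto
  then have "R > 0"
    by (meson zero_less_one order.strict_trans)
  have near_0: "eventually (\<lambda>x. 0 < x \<and> x < R) (at_right 0)"
    using \<open>R > 0\<close> by (intro eventually_at_rightI[where b=R]) auto
  show "filterlim \<phi> (at_right 0) (at_right 0)"
    unfolding filterlim_at
  proof
    show "eventually (\<lambda>x. \<phi> x \<in> {0<..} \<and> \<phi> x \<noteq> 0) (at_right 0)"
      using near_0 by eventually_elim (metis \<phi>(1) greaterThan_iff less_irrefl)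
    show "(\<phi> \<longlongrightarrow> 0) (at_right 0)"
    proof (rule order_tendstoI)
      fix a :: real assume "a < 0"
      show "eventually (\<lambda>x. a < \<phi> x) (at_right 0)"
        using near_0 by eventually_elim (metis \<phi>(1) \<open>a < 0\<close> less_trans)
    next
      fix a :: real assume "0 < a"
      then have "eventually (\<lambda>x. x < r a) (at_right 0)"
        using order_tendstoD(2)[OF tendsto_ident_at[of 0 "{0<..}"]] range[of a] by blast
      then show "eventually (\<lambda>x. \<phi> x < a) (at_right 0)"
        using near_0 by eventually_elim (simp add: \<phi>_less \<open>0 < a\<close>)
    qed
  qed
  show "filterlim \<phi> at_top (at_left R)"
    unfolding filterlim_at_top
  proof
    fix Z :: real
    define s where "s = max Z 1"
    have "s > 0" "0 < r s" "r s < R"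
      using range[of s] unfolding s_def by auto
    then have "eventually (\<lambda>x. r s < x \<and> x < R) (at_left R)"
      unfolding eventually_at_left[OF \<open>r s < R\<close>] by auto
    then show "eventually (\<lambda>x. Z \<le> \<phi> x) (at_left R)"
    proof eventually_elim
      case (elim x)
      then have "\<not> \<phi> x < s"
        using \<phi>_less[of x s] \<open>s > 0\<close> \<open>0 < r s\<close> by simp
      then show ?case
        unfolding s_def by simp
    qed
  qed
qed

lemma increasing_parametrization_inverse:
  fixes r r' :: "real \<Rightarrow> real"
  assumes der: "\<And>s. s > 0 \<Longrightarrow> (r has_real_derivative r' s) (at s)"
    and pos: "\<And>s. s > 0 \<Longrightarrow> r' s > 0"
    and r0: "(r \<longlongrightarrow> 0) (at_right 0)" and rR: "(r \<longlongrightarrow> R) at_top"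
  obtains \<phi> where
    "\<And>x. 0 < x \<Longrightarrow> x < R \<Longrightarrow>
       \<phi> x > 0 \<and> r (\<phi> x) = x \<and> (\<phi> has_real_derivative inverse (r' (\<phi> x))) (at x)"
    "filterlim \<phi> (at_right 0) (at_right 0)" "filterlim \<phi> at_top (at_left R)"
proof -
  note mono = DERIV_pos_image_eq(1)[OF der pos r0 rR]
    and image = DERIV_pos_image_eq(2)[OF der pos r0 rR]
  define \<phi> where "\<phi> = the_inv_into {0<..} r"
  have inj: "inj_on r {0<..}"
    using mono by (rule strict_mono_on_imp_inj_on)
  have \<phi>: "\<phi> x > 0 \<and> r (\<phi> x) = x" if "0 < x" "x < R" for x
    using the_inv_into_into[OF inj, of x] f_the_inv_into_f[OF inj, of x] image that
    unfolding \<phi>_def by auto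
  have \<phi>_r: "\<phi> (r s) = s" if "s > 0" for s
    unfolding \<phi>_def using that by (simp add: the_inv_into_f_f[OF inj])
  have \<phi>_deriv: "(\<phi> has_real_derivative inverse (r' (\<phi> x))) (at x)" if x: "0 < x" "x < R" for x
  proof (rule DERIV_inverse_function[where f=r and a=0 and b=R])
    have "\<phi> x > 0"
      using \<phi>[OF x] by simp
    have "isCont \<phi> (r (\<phi> x))"
    proof (rule isCont_inverse_function2[where f=r and g=\<phi> and x="\<phi> x" and a="\<phi> x / 2" and b="2 * \<phi> x"])
      fix z assume "\<phi> x / 2 \<le> z"
      then have "z > 0" using \<open>\<phi> x > 0\<close> by linarith
      then show "\<phi> (r z) = z" by (rule \<phi>_r)
      show "isCont r z" using der[OF \<open>z > 0\<close>] by (rule DERIV_isCont)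
    qed (use \<open>\<phi> x > 0\<close> in auto)
    then show "isCont \<phi> x"
      using \<phi>[OF x] by simp
    show "(r has_real_derivative r' (\<phi> x)) (at (\<phi> x))"
      using \<open>\<phi> x > 0\<close> by (rule der)
    show "r' (\<phi> x) \<noteq> 0"
      using pos[OF \<open>\<phi> x > 0\<close>] by simp
  qed (use x \<phi> in simp_all)
  show ?thesis
    using that \<phi> \<phi>_deriv strict_mono_on_inverse_limits[OF mono image] unfolding \<phi>_def by blast
qed

lemma subsingleton_closedin_interior_empty:
  fixes S T :: "'a::{t1_space, perfect_space} set"
  assumes "S \<subseteq> T" and "\<And>x y. x \<in> S \<Longrightarrow> y \<in> S \<Longrightarrow> x = y"
  shows "closedin (top_of_set T) S \<and> interior S = {}"
proof (cases "S = {}")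
  case False
  then obtain b where "S = {b}"
    using assms(2) by blast
  then show ?thesis
    using assms(1) by (auto intro: closed_subset)
qed simp

lemma sqrt_one_minus_square_squared:
  fixes p :: real
  assumes "\<bar>p\<bar> \<le> 1"
  shows "(sqrt (1 - p\<^sup>2))\<^sup>2 = 1 - p\<^sup>2"
  using assms by (simp add: abs_square_le_1)

lemma cube_sqrt_one_minus_square_diff_ge:
  fixes p1 p2 :: real
  assumes "0 \<le> p2" "p2 \<le> p1" "p1 \<le> 1"
  shows "(sqrt (1 - p2\<^sup>2))^3 - (sqrt (1 - p1\<^sup>2))^3 \<ge> 3/2 * sqrt (1 - p1\<^sup>2) * ((p1 + p2) * (p1 - p2))"
proof -
  define a1 a2 where "a1 = sqrt (1 - p1\<^sup>2)" and "a2 = sqrt (1 - p2\<^sup>2)"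
  have "p2\<^sup>2 \<le> p1\<^sup>2" "p1\<^sup>2 \<le> 1"
    using assms by (auto intro: power_mono power_le_one)
  then have a: "0 \<le> a1" "a1 \<le> a2" "a1\<^sup>2 = 1 - p1\<^sup>2" "a2\<^sup>2 = 1 - p2\<^sup>2"
    unfolding a1_def a2_def by auto
  then have diff: "a2\<^sup>2 - a1\<^sup>2 = (p1 + p2) * (p1 - p2)"
    by (simp add: algebra_simps power2_eq_square)
  have "a2^3 - a1^3 - 3/2 * a1 * (a2\<^sup>2 - a1\<^sup>2) = (a2 - a1)\<^sup>2 * (a2 + a1/2)"
    by (simp add: field_simps power2_eq_square power3_eq_cube)
  also have "\<dots> \<ge> 0"
    using a by simp
  finally show ?thesis
    unfolding a1_def[symmetric] a2_def[symmetric] diff[symmetric] by simp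
qed

section \<open>Asymptotics of a toy solution\<close>

lemma toy_steady_tip_growthD:
  assumes "toy_steady_tip_growth g \<beta> \<rho> r" "s > 0"
  shows "0 < \<rho> s" "\<rho> s < 1" "0 < r s"
    "(\<rho> has_real_derivative toy_rhs g \<beta> (\<rho> s) (r s)) (at s)"
    "(r has_real_derivative \<rho> s) (at s)"
  using assms unfolding toy_steady_tip_growth_def by blast+

lemma tendsto_one_minus_div_square:
  fixes \<rho> r :: "'a \<Rightarrow> real"
  assumes "eventually (\<lambda>s. 0 < \<rho> s \<and> \<rho> s < 1 \<and> 0 < r s) F" and "(\<rho> \<longlongrightarrow> 1) F"
    and "((\<lambda>s. sqrt (1 - (\<rho> s)\<^sup>2) / r s) \<longlongrightarrow> \<eta>) F"
  shows "((\<lambda>s. (1 - \<rho> s) / (r s)\<^sup>2) \<longlongrightarrow> \<eta>\<^sup>2 / 2) F"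
proof -
  have "((\<lambda>s. (sqrt (1 - (\<rho> s)\<^sup>2) / r s)\<^sup>2 / (1 + \<rho> s)) \<longlongrightarrow> \<eta>\<^sup>2 / (1 + 1)) F"
    using assms(2,3) by (intro tendsto_intros) simp_all
  moreover have "eventually (\<lambda>s. (sqrt (1 - (\<rho> s)\<^sup>2) / r s)\<^sup>2 / (1 + \<rho> s) = (1 - \<rho> s) / (r s)\<^sup>2) F"
    using assms(1)
  proof eventually_elim
    case (elim s)
    have "(sqrt (1 - (\<rho> s)\<^sup>2) / r s)\<^sup>2 = (1 - \<rho> s) * (1 + \<rho> s) / (r s)\<^sup>2"
      unfolding power_divide
      by (subst sqrt_one_minus_square_squared) (use elim in \<open>auto simp: power2_eq_square algebra_simps\<close>)
    then show ?case
      using elim by simp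
  qed
  ultimately show ?thesis
    by (auto elim: Lim_transform_eventually)
qed

lemma toy_rhs_div_eq:
  assumes "0 < p" "p < 1" "x > 0"
  shows "- toy_rhs g \<beta> p x / (2 * x * p)
    = 3/4 * (sqrt (1 - p\<^sup>2) / x)\<^sup>2 / p * (1 - sqrt (1 - p\<^sup>2) / x * (\<beta> * x\<^sup>2 * g (x\<^sup>2) + p))"
  unfolding toy_rhs_def power_divide
  by (subst sqrt_one_minus_square_squared) (use assms in \<open>auto simp: field_simps power2_eq_square\<close>)

text \<open>Since \<open>r' = \<rho>\<close>, L'Hopital's rule turns \<open>(1 - \<rho>) / r\<^sup>2\<close> into \<open>- \<rho>' / (2 r \<rho>)\<close>.\<close>
lemma toy_tip_lhopital:
  assumes sol: "toy_steady_tip_growth g \<beta> \<rho> r" and "isCont g 0"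
    and \<eta>: "((\<lambda>s. sqrt (1 - (\<rho> s)\<^sup>2) / r s) \<longlongrightarrow> \<eta>) (at_right 0)"
  shows "((\<lambda>s. (1 - \<rho> s) / (r s)\<^sup>2) \<longlongrightarrow> 3/4 * \<eta>\<^sup>2 * (1 - \<eta>)) (at_right 0)"
proof -
  note D = toy_steady_tip_growthD[OF sol]
  have \<rho>: "(\<rho> \<longlongrightarrow> 1) (at_right 0)" and r: "(r \<longlongrightarrow> 0) (at_right 0)"
    using sol unfolding toy_steady_tip_growth_def by blast+
  define q where "q s = sqrt (1 - (\<rho> s)\<^sup>2) / r s" for s
  have r2: "((\<lambda>s. (r s)\<^sup>2) \<longlongrightarrow> 0) (at_right 0)"
    using tendsto_power[OF r, of 2] by simp
  then have "((\<lambda>s. g ((r s)\<^sup>2)) \<longlongrightarrow> g 0) (at_right 0)"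
    by (rule isCont_tendsto_compose[OF \<open>isCont g 0\<close>])
  then have "((\<lambda>s. 3/4 * (q s)\<^sup>2 / \<rho> s * (1 - q s * (\<beta> * (r s)\<^sup>2 * g ((r s)\<^sup>2) + \<rho> s))) \<longlongrightarrow>
      3/4 * \<eta>\<^sup>2 / 1 * (1 - \<eta> * (\<beta> * 0\<^sup>2 * g 0 + 1))) (at_right 0)"
    using \<eta> \<rho> r unfolding q_def by (intro tendsto_intros) simp_all
  moreover have "eventually (\<lambda>s. 3/4 * (q s)\<^sup>2 / \<rho> s * (1 - q s * (\<beta> * (r s)\<^sup>2 * g ((r s)\<^sup>2) + \<rho> s))
      = - toy_rhs g \<beta> (\<rho> s) (r s) / (2 * r s * \<rho> s)) (at_right 0)"
    unfolding q_def by (intro eventually_at_right_0I toy_rhs_div_eq[symmetric]) (simp_all add: D)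
  ultimately have "((\<lambda>s. - toy_rhs g \<beta> (\<rho> s) (r s) / (2 * r s * \<rho> s))
      \<longlongrightarrow> 3/4 * \<eta>\<^sup>2 * (1 - \<eta>)) (at_right 0)"
    by (auto elim: Lim_transform_eventually)
  then show ?thesis
  proof (rule lhopital_right_0[rotated 6])
    show "((\<lambda>s. 1 - \<rho> s) \<longlongrightarrow> 0) (at_right 0)"
      using tendsto_diff[OF tendsto_const \<rho>, of 1] by simp
    show "eventually (\<lambda>s. (r s)\<^sup>2 \<noteq> 0) (at_right 0)"
      "eventually (\<lambda>s. 2 * r s * \<rho> s \<noteq> 0) (at_right 0)"
      by (intro eventually_at_right_0I, use D(1,3) in fastforce)+
    show "eventually (\<lambda>s. ((\<lambda>s. 1 - \<rho> s) has_real_derivative - toy_rhs g \<beta> (\<rho> s) (r s)) (at s)) (at_right 0)"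
      "eventually (\<lambda>s. ((\<lambda>s. (r s)\<^sup>2) has_real_derivative 2 * r s * \<rho> s) (at s)) (at_right 0)"
      by (intro eventually_at_right_0I, auto intro!: derivative_eq_intros D)+
  qed (rule r2)
qed

lemma toy_tip_limit:
  assumes sol: "toy_steady_tip_growth g \<beta> \<rho> r" and "isCont g 0"
  shows "((\<lambda>s. sqrt (1 - (\<rho> s)\<^sup>2) / r s) \<longlongrightarrow> 1/3) (at_right 0)"
proof -
  obtain \<eta> where "\<eta> > 0" and \<eta>: "((\<lambda>s. sqrt (1 - (\<rho> s)\<^sup>2) / r s) \<longlongrightarrow> \<eta>) (at_right 0)"
    using sol unfolding toy_steady_tip_growth_def by blast
  have "((\<lambda>s. (1 - \<rho> s) / (r s)\<^sup>2) \<longlongrightarrow> \<eta>\<^sup>2 / 2) (at_right 0)"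
    using sol \<eta> unfolding toy_steady_tip_growth_def
    by (intro tendsto_one_minus_div_square eventually_at_right_0I) blast+
  with toy_tip_lhopital[OF sol \<open>isCont g 0\<close> \<eta>] have "3/4 * \<eta>\<^sup>2 * (1 - \<eta>) = \<eta>\<^sup>2 / 2"
    by (rule tendsto_unique[rotated]) simp
  then have "\<eta> = 1/3"
    using \<open>\<eta> > 0\<close> by (simp add: field_simps power2_eq_square)
  then show ?thesis
    using \<eta> by (simp only:)
qed

lemma toy_tail_balance:
  assumes sol: "toy_steady_tip_growth g \<beta> \<rho> r" and g: "\<And>x. isCont g x"
    and r: "(r \<longlongrightarrow> R) at_top" "R > 0"
  shows "\<beta> * R * g (R\<^sup>2) = 1"
proof -
  have \<rho>: "(\<rho> \<longlongrightarrow> 0) at_top"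
    using sol unfolding toy_steady_tip_growth_def by blast
  have "((\<lambda>s. g ((r s)\<^sup>2)) \<longlongrightarrow> g (R\<^sup>2)) at_top"
    using isCont_tendsto_compose[OF g tendsto_power[OF r(1)]] .
  then have "((\<lambda>s. toy_rhs g \<beta> (\<rho> s) (r s)) \<longlongrightarrow>
      3/2 * (1 - 0\<^sup>2) / R * (-1 + sqrt (1 - 0\<^sup>2) * (\<beta> * R\<^sup>2 * g (R\<^sup>2) + 0) / R)) at_top"
    unfolding toy_rhs_def using r by (intro tendsto_intros \<rho>) auto
  with toy_steady_tip_growthD(4)[OF sol] \<rho>
  have "3/2 * (1 - 0\<^sup>2) / R * (-1 + sqrt (1 - 0\<^sup>2) * (\<beta> * R\<^sup>2 * g (R\<^sup>2) + 0) / R) = 0"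
    by (rule DERIV_tendsto_at_top_eq_0)
  then show ?thesis
    using r(2) by (simp add: field_simps power2_eq_square)
qed

section \<open>The profile equation\<close>

text \<open>Along a solution \<open>r' = \<rho>\<close>, so \<open>toy_slope g \<beta> \<rho> r\<close> is \<open>d\<rho>/dr\<close>: the profile
  equation in the graph variable \<open>r\<close>.\<close>
definition toy_slope :: "(real \<Rightarrow> real) \<Rightarrow> real \<Rightarrow> real \<Rightarrow> real \<Rightarrow> real" where
  "toy_slope g \<beta> p x = toy_rhs g \<beta> p x / p"

lemma toy_slope_eq:
  assumes "0 < p" "p < 1" "x > 0"
  shows "toy_slope g \<beta> p x = 3 / (2 * x) *
    (p - 1/p + (sqrt (1 - p\<^sup>2))^3 / x + \<beta> * x * g (x\<^sup>2) * (sqrt (1 - p\<^sup>2))^3 / p)"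
proof -
  define a where "a = sqrt (1 - p\<^sup>2)"
  have a: "a\<^sup>2 = 1 - p\<^sup>2"
    unfolding a_def using assms by (simp add: sqrt_one_minus_square_squared)
  have "toy_slope g \<beta> p x = 3/2 * a\<^sup>2 / x * (-1 + a * (\<beta> * x\<^sup>2 * g (x\<^sup>2) + p) / x) / p"
    unfolding toy_slope_def toy_rhs_def a a_def[symmetric] ..
  also have "\<dots> = 3 / (2 * x) * (- a\<^sup>2/p + a^3 / x + \<beta> * x * g (x\<^sup>2) * a^3 / p)"
    using assms by (simp add: field_simps power2_eq_square power3_eq_cube)
  also have "- a\<^sup>2/p = p - 1/p"
    using assms a by (simp add: field_simps power2_eq_square)
  finally show ?thesis
    unfolding a_def .
qed

lemma toy_slope_strict_mono_beta:
  assumes "0 < p" "p < 1" "x > 0" "g (x\<^sup>2) > 0" "\<beta>1 < \<beta>2"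
  shows "toy_slope g \<beta>1 p x < toy_slope g \<beta>2 p x"
proof -
  have "sqrt (1 - p\<^sup>2) > 0"
    using assms by (simp add: abs_square_less_1)
  then have "\<beta>1 * x * g (x\<^sup>2) * (sqrt (1 - p\<^sup>2))^3 / p < \<beta>2 * x * g (x\<^sup>2) * (sqrt (1 - p\<^sup>2))^3 / p"
    using assms by (intro divide_strict_right_mono mult_strict_right_mono) auto
  then show ?thesis
    unfolding toy_slope_eq[OF assms(1-3)] using assms by (simp add: field_simps)
qed

lemma toy_slope_diff_eq:
  assumes "0 < p1" "p1 < 1" "0 < p2" "p2 < 1" "x > 0"
  shows "toy_slope g \<beta> p1 x - toy_slope g \<beta> p2 x = 3 / (2 * x) *
    ((p1 - p2) + (1/p2 - 1/p1) + ((sqrt (1 - p1\<^sup>2))^3 - (sqrt (1 - p2\<^sup>2))^3) / x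
      + (\<beta> * x * g (x\<^sup>2) * (sqrt (1 - p1\<^sup>2))^3 / p1 - \<beta> * x * g (x\<^sup>2) * (sqrt (1 - p2\<^sup>2))^3 / p2))"
  unfolding toy_slope_eq[OF assms(1,2,5)] toy_slope_eq[OF assms(3,4,5)]
  by (simp add: diff_divide_distrib algebra_simps)

text \<open>Near the tip, where \<open>\<rho> \<approx> 1\<close> and \<open>sqrt (1 - \<rho>\<^sup>2) \<approx> r/3\<close>, the cubic term makes the slope
  decrease fast enough in \<open>p\<close>; the constants \<open>99/100\<close> and \<open>3/10\<close> are margins below these limits.\<close>
lemma toy_slope_diff_le:
  assumes p: "99/100 \<le> p2" "p2 < p1" "p1 < 1" and "x > 0" "\<beta> > 0" "g (x\<^sup>2) \<ge> 0"
    and tip: "sqrt (1 - p1\<^sup>2) \<ge> 3/10 * x"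
  shows "toy_slope g \<beta> p1 x - toy_slope g \<beta> p2 x \<le> 2 / x * (p1 - p2)"
proof -
  define a1 a2 where "a1 = sqrt (1 - p1\<^sup>2)" and "a2 = sqrt (1 - p2\<^sup>2)"
  define G where "G = \<beta> * x * g (x\<^sup>2)"
  have "0 < p2" "0 < p1" "p2 < 1"
    using p by simp_all
  have "p2\<^sup>2 \<le> p1\<^sup>2" "p1\<^sup>2 \<le> 1"
    using p by (auto intro: power_mono power_le_one)
  then have "0 \<le> a1" "a1 \<le> a2"
    unfolding a1_def a2_def by auto
  have reciprocal: "1/p2 - 1/p1 \<le> 10000/9801 * (p1 - p2)"
  proof -
    have "9801/10000 \<le> p1 * p2"
      using p mult_mono[of "99/100" p1 "99/100" p2] by auto
    then have "(p1 - p2) / (p1 * p2) \<le> (p1 - p2) / (9801/10000)"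
      using p by (intro divide_left_mono) auto
    then show ?thesis
      using \<open>0 < p2\<close> p by (simp add: field_simps)
  qed
  have cubic: "(a1^3 - a2^3) / x \<le> - 891/1000 * (p1 - p2)"
  proof -
    have "198/100 * (p1 - p2) \<le> (p1 + p2) * (p1 - p2)"
      using p by (intro mult_right_mono) auto
    have "891/1000 * x * (p1 - p2) = 3/2 * (3/10 * x) * (198/100 * (p1 - p2))"
      by simp
    also have "\<dots> \<le> 3/2 * a1 * ((p1 + p2) * (p1 - p2))"
      using \<open>198/100 * (p1 - p2) \<le> _\<close> tip[folded a1_def] p \<open>x > 0\<close> \<open>0 \<le> a1\<close>
      by (intro mult_mono) auto
    also have "\<dots> \<le> a2^3 - a1^3"
      unfolding a1_def a2_def using p by (intro cube_sqrt_one_minus_square_diff_ge) auto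
    finally show ?thesis
      using \<open>x > 0\<close> by (simp add: field_simps)
  qed
  have "a1^3 / p1 \<le> a2^3 / p2"
    using p \<open>0 \<le> a1\<close> \<open>a1 \<le> a2\<close> by (intro frac_le power_mono) auto
  moreover have "G \<ge> 0"
    using \<open>g (x\<^sup>2) \<ge> 0\<close> \<open>\<beta> > 0\<close> \<open>x > 0\<close> unfolding G_def by simp
  ultimately have transport: "G * a1^3 / p1 \<le> G * a2^3 / p2"
    using mult_left_mono by fastforce
  have "toy_slope g \<beta> p1 x - toy_slope g \<beta> p2 x = 3 / (2 * x) *
      ((p1 - p2) + (1/p2 - 1/p1) + (a1^3 - a2^3) / x + (G * a1^3 / p1 - G * a2^3 / p2))"
    unfolding a1_def a2_def G_def using p \<open>0 < p2\<close> \<open>x > 0\<close> by (intro toy_slope_diff_eq) auto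
  also have "\<dots> \<le> 3 / (2 * x) * (4/3 * (p1 - p2))"
  proof (rule mult_left_mono)
    show "(p1 - p2) + (1/p2 - 1/p1) + (a1^3 - a2^3) / x + (G * a1^3 / p1 - G * a2^3 / p2)
        \<le> 4/3 * (p1 - p2)"
      using reciprocal cubic transport p by (simp add: ring_distribs)
  qed (use \<open>x > 0\<close> in simp)
  also have "\<dots> = 2 / x * (p1 - p2)"
    using \<open>x > 0\<close> by (simp add: field_simps)
  finally show ?thesis .
qed

text \<open>A solution written as a graph \<open>\<rho> = P r\<close> over \<open>0 < r < R\<close>, where \<open>R\<close> is the limit
  of \<open>r\<close> at infinity.\<close>
definition toy_profile :: "(real \<Rightarrow> real) \<Rightarrow> real \<Rightarrow> real \<Rightarrow> (real \<Rightarrow> real) \<Rightarrow> bool" where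
  "toy_profile g \<beta> R P \<longleftrightarrow> R > 0 \<and> \<beta> * R * g (R\<^sup>2) = 1 \<and>
     (\<forall>x\<in>{0<..<R}. 0 < P x \<and> P x < 1 \<and> (P has_real_derivative toy_slope g \<beta> (P x) x) (at x)) \<and>
     (P \<longlongrightarrow> 0) (at_left R) \<and> (P \<longlongrightarrow> 1) (at_right 0) \<and>
     ((\<lambda>x. sqrt (1 - (P x)\<^sup>2) / x) \<longlongrightarrow> 1/3) (at_right 0)"

lemma toy_profileD:
  assumes "toy_profile g \<beta> R P"
  shows "R > 0" "\<beta> * R * g (R\<^sup>2) = 1" "(P \<longlongrightarrow> 0) (at_left R)" "(P \<longlongrightarrow> 1) (at_right 0)"
    "((\<lambda>x. sqrt (1 - (P x)\<^sup>2) / x) \<longlongrightarrow> 1/3) (at_right 0)"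
    and "0 < x \<Longrightarrow> x < R \<Longrightarrow> 0 < P x" "0 < x \<Longrightarrow> x < R \<Longrightarrow> P x < 1"
    and "0 < x \<Longrightarrow> x < R \<Longrightarrow> (P has_real_derivative toy_slope g \<beta> (P x) x) (at x)"
  using assms unfolding toy_profile_def by auto

lemma toy_steady_tip_growth_profile:
  assumes sol: "toy_steady_tip_growth g \<beta> \<rho> r" and g: "\<And>x. isCont g x"
  obtains R P where "toy_profile g \<beta> R P"
proof -
  note D = toy_steady_tip_growthD[OF sol]
  have \<rho>: "(\<rho> \<longlongrightarrow> 1) (at_right 0)" "(\<rho> \<longlongrightarrow> 0) at_top" and r: "(r \<longlongrightarrow> 0) (at_right 0)"
    using sol unfolding toy_steady_tip_growth_def by blast+
  obtain R where "R > 0" and R: "(r \<longlongrightarrow> R) at_top"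
    using sol unfolding toy_steady_tip_growth_def by blast
  obtain \<phi> where \<phi>: "\<And>x. 0 < x \<Longrightarrow> x < R \<Longrightarrow>
      \<phi> x > 0 \<and> r (\<phi> x) = x \<and> (\<phi> has_real_derivative inverse (\<rho> (\<phi> x))) (at x)"
    and \<phi>_0: "filterlim \<phi> (at_right 0) (at_right 0)" and \<phi>_R: "filterlim \<phi> at_top (at_left R)"
    using increasing_parametrization_inverse[of r \<rho> R] D r R by blast
  define P where "P = (\<lambda>x. \<rho> (\<phi> x))"
  have "0 < P x \<and> P x < 1 \<and> (P has_real_derivative toy_slope g \<beta> (P x) x) (at x)"
    if "0 < x" "x < R" for x
  proof -
    have "(P has_real_derivative toy_rhs g \<beta> (\<rho> (\<phi> x)) (r (\<phi> x)) * inverse (\<rho> (\<phi> x))) (at x)"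
      unfolding P_def using \<phi>[OF that] D(4)[of "\<phi> x"] by (intro DERIV_chain2) auto
    then show ?thesis
      using \<phi>[OF that] D(1,2) unfolding toy_slope_def P_def by (simp add: divide_inverse)
  qed
  moreover have "(P \<longlongrightarrow> 0) (at_left R)" "(P \<longlongrightarrow> 1) (at_right 0)"
    unfolding P_def using filterlim_compose[OF \<rho>(2) \<phi>_R] filterlim_compose[OF \<rho>(1) \<phi>_0] by auto
  moreover have "((\<lambda>x. sqrt (1 - (P x)\<^sup>2) / x) \<longlongrightarrow> 1/3) (at_right 0)"
  proof -
    have "((\<lambda>x. sqrt (1 - (\<rho> (\<phi> x))\<^sup>2) / r (\<phi> x)) \<longlongrightarrow> 1/3) (at_right 0)"
      using filterlim_compose[OF toy_tip_limit[OF sol g] \<phi>_0] .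
    moreover have "eventually (\<lambda>x. 0 < x \<and> x < R) (at_right 0)"
      using \<open>R > 0\<close> by (intro eventually_at_rightI[where b=R]) auto
    then have "eventually (\<lambda>x. sqrt (1 - (\<rho> (\<phi> x))\<^sup>2) / r (\<phi> x) = sqrt (1 - (P x)\<^sup>2) / x) (at_right 0)"
      by eventually_elim (simp add: \<phi> P_def)
    ultimately show ?thesis
      by (rule Lim_transform_eventually)
  qed
  ultimately have "toy_profile g \<beta> R P"
    unfolding toy_profile_def using \<open>R > 0\<close> toy_tail_balance[OF sol g R \<open>R > 0\<close>] by auto
  then show ?thesis
    by (rule that)
qed

section \<open>Comparison of two profiles\<close>

lemma toy_profile_radius_less:
  assumes P1: "toy_profile g \<beta>1 R1 P1" and P2: "toy_profile g \<beta>2 R2 P2" and "0 < \<beta>1" "\<beta>1 < \<beta>2"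
    and g_pos: "\<And>v. v > 0 \<Longrightarrow> g v > 0" and g_mono: "mono_on {0<..} g"
  shows "R2 < R1"
proof (rule ccontr)
  assume "\<not> R2 < R1"
  then have "0 < R1" "R1 \<le> R2"
    using toy_profileD(1)[OF P1] by auto
  then have "g (R1\<^sup>2) \<le> g (R2\<^sup>2)"
    using mono_onD[OF g_mono] by (simp add: power_mono)
  have "1 = \<beta>1 * R1 * g (R1\<^sup>2)"
    using toy_profileD(2)[OF P1] by simp
  also have "\<dots> < \<beta>2 * R1 * g (R1\<^sup>2)"
    using \<open>\<beta>1 < \<beta>2\<close> \<open>0 < R1\<close> g_pos[of "R1\<^sup>2"] by (intro mult_strict_right_mono) auto
  also have "\<dots> \<le> \<beta>2 * R2 * g (R2\<^sup>2)"
    using assms(3,4) \<open>0 < R1\<close> \<open>R1 \<le> R2\<close> g_pos[of "R1\<^sup>2"] \<open>g (R1\<^sup>2) \<le> g (R2\<^sup>2)\<close>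
    by (intro mult_mono) auto
  also have "\<dots> = 1"
    using toy_profileD(2)[OF P2] .
  finally show False
    by simp
qed

lemma toy_profile_less:
  assumes P1: "toy_profile g \<beta>1 R1 P1" and P2: "toy_profile g \<beta>2 R2 P2"
    and "R2 < R1" "\<beta>1 < \<beta>2" and g_pos: "\<And>v. v > 0 \<Longrightarrow> g v > 0"
    and x: "0 < x" "x < R2"
  shows "P2 x < P1 x"
proof -
  note P1' = toy_profileD(6-8)[OF P1] and P2' = toy_profileD(6-8)[OF P2]
  have "R2 > 0"
    using toy_profileD(1)[OF P2] .
  have "isCont P1 R2"
    using P1'(3)[of R2] \<open>R2 > 0\<close> \<open>R2 < R1\<close> by (auto intro: DERIV_isCont)
  then have "(P1 \<longlongrightarrow> P1 R2) (at_left R2)"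
    unfolding isCont_def filterlim_at_split by simp
  then have "((\<lambda>x. P2 x - P1 x) \<longlongrightarrow> 0 - P1 R2) (at_left R2)"
    using toy_profileD(3)[OF P2] by (intro tendsto_intros)
  then have near_R2: "eventually (\<lambda>x. P2 x - P1 x < 0) (at_left R2)"
    using P1'(1)[of R2] \<open>R2 > 0\<close> \<open>R2 < R1\<close> by (intro order_tendstoD(2)) auto
  have "P2 x - P1 x < 0"
  proof (rule neg_if_DERIV_pos_at_zeros[where f="\<lambda>x. P2 x - P1 x", OF _ _ near_R2 x])
    fix y assume y: "0 < y" "y < R2"
    then have "y < R1"
      using \<open>R2 < R1\<close> by simp
    show "((\<lambda>x. P2 x - P1 x) has_real_derivative toy_slope g \<beta>2 (P2 y) y - toy_slope g \<beta>1 (P1 y) y) (at y)"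
      using P1'(3)[OF y(1) \<open>y < R1\<close>] P2'(3)[OF y] by (intro derivative_intros)
    assume "P2 y - P1 y = 0"
    then show "toy_slope g \<beta>2 (P2 y) y - toy_slope g \<beta>1 (P1 y) y > 0"
      using toy_slope_strict_mono_beta[of "P1 y" y g \<beta>1 \<beta>2] P1'(1,2)[OF y(1) \<open>y < R1\<close>] y
        g_pos[of "y\<^sup>2"] \<open>\<beta>1 < \<beta>2\<close>
      by simp
  qed
  then show ?thesis
    by simp
qed

lemma toy_profile_tip_quadratic:
  assumes P: "toy_profile g \<beta> R P"
  shows "((\<lambda>x. (1 - P x) / x\<^sup>2) \<longlongrightarrow> 1/18) (at_right 0)"
proof -
  have "eventually (\<lambda>x. 0 < P x \<and> P x < 1 \<and> 0 < x) (at_right 0)"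
    using toy_profileD(1,6,7)[OF P] by (intro eventually_at_rightI[where b=R]) auto
  then have "((\<lambda>x. (1 - P x) / x\<^sup>2) \<longlongrightarrow> (1/3)\<^sup>2 / 2) (at_right 0)"
    using toy_profileD(4,5)[OF P] by (rule tendsto_one_minus_div_square[where r="\<lambda>x. x"])
  then show ?thesis
    by (simp add: power2_eq_square)
qed

lemma toy_profile_tip_gap_growth:
  assumes P1: "toy_profile g \<beta>1 R1 P1" and P2: "toy_profile g \<beta>2 R2 P2"
    and "R2 < R1" "0 < \<beta>1" "\<beta>1 < \<beta>2" and g_pos: "\<And>v. v > 0 \<Longrightarrow> g v > 0"
  shows "eventually (\<lambda>x. 0 < x \<and> x < R2 \<and>
    toy_slope g \<beta>2 (P2 x) x - toy_slope g \<beta>1 (P1 x) x > 2 / x * (P2 x - P1 x)) (at_right 0)"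
proof -
  have "eventually (\<lambda>x. 99/100 < P1 x) (at_right 0)"
    by (rule order_tendstoD(1)[OF toy_profileD(4)[OF P1]]) simp
  moreover have "eventually (\<lambda>x. 99/100 < P2 x) (at_right 0)"
    by (rule order_tendstoD(1)[OF toy_profileD(4)[OF P2]]) simp
  moreover have "eventually (\<lambda>x. 3/10 < sqrt (1 - (P1 x)\<^sup>2) / x) (at_right 0)"
    by (rule order_tendstoD(1)[OF toy_profileD(5)[OF P1]]) simp
  moreover have "eventually (\<lambda>x. 0 < x \<and> x < R2) (at_right 0)"
    using toy_profileD(1)[OF P2] by (intro eventually_at_rightI[where b=R2]) auto
  ultimately show ?thesis
  proof eventually_elim
    case (elim x)
    then have "x < R1"
      using \<open>R2 < R1\<close> by simp
    then have P: "0 < P1 x" "P1 x < 1" "0 < P2 x" "P2 x < 1"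
      using toy_profileD(6,7)[OF P1] toy_profileD(6,7)[OF P2] elim by auto
    have "P2 x < P1 x"
      using toy_profile_less[OF P1 P2 \<open>R2 < R1\<close> \<open>\<beta>1 < \<beta>2\<close> g_pos] elim by auto
    then have "toy_slope g \<beta>1 (P1 x) x - toy_slope g \<beta>1 (P2 x) x \<le> 2 / x * (P1 x - P2 x)"
      using elim \<open>0 < \<beta>1\<close> g_pos[of "x\<^sup>2"] P by (intro toy_slope_diff_le) (auto simp: field_simps)
    moreover have "toy_slope g \<beta>1 (P2 x) x < toy_slope g \<beta>2 (P2 x) x"
      using elim P g_pos[of "x\<^sup>2"] \<open>\<beta>1 < \<beta>2\<close> by (intro toy_slope_strict_mono_beta) auto
    moreover have "2 / x * (P2 x - P1 x) = - (2 / x * (P1 x - P2 x))"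
      by (simp only: minus_mult_right minus_diff_eq)
    ultimately show ?case
      using elim by linarith
  qed
qed

lemma toy_profile_beta_unique:
  assumes P1: "toy_profile g \<beta>1 R1 P1" and P2: "toy_profile g \<beta>2 R2 P2"
    and "0 < \<beta>1" "\<beta>1 < \<beta>2"
    and g_pos: "\<And>v. v > 0 \<Longrightarrow> g v > 0" and g_mono: "mono_on {0<..} g"
  shows False
proof -
  have "R2 < R1"
    using toy_profile_radius_less[OF P1 P2] assms by blast
  obtain \<delta> where "\<delta> > 0" and \<delta>: "\<And>x. 0 < x \<Longrightarrow> x < \<delta> \<Longrightarrow> 0 < x \<and> x < R2 \<and>
      toy_slope g \<beta>2 (P2 x) x - toy_slope g \<beta>1 (P1 x) x > 2 / x * (P2 x - P1 x)"
    using toy_profile_tip_gap_growth[OF P1 P2 \<open>R2 < R1\<close> \<open>0 < \<beta>1\<close> \<open>\<beta>1 < \<beta>2\<close> g_pos]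
    unfolding eventually_at_right[OF zero_less_one] by metis
  have "P2 (\<delta>/2) - P1 (\<delta>/2) > 0"
  proof (rule pos_if_DERIV_gt_two_div[where D="\<lambda>x. P2 x - P1 x" and b=\<delta>])
    fix x assume "0 < x" "x < \<delta>"
    then have x: "0 < x" "x < R2" "x < R1"
      using \<delta>[of x] \<open>R2 < R1\<close> by auto
    show "((\<lambda>x. P2 x - P1 x) has_real_derivative
        toy_slope g \<beta>2 (P2 x) x - toy_slope g \<beta>1 (P1 x) x) (at x)"
      using toy_profileD(8)[OF P1 x(1,3)] toy_profileD(8)[OF P2 x(1,2)] by (intro derivative_intros)
    show "toy_slope g \<beta>2 (P2 x) x - toy_slope g \<beta>1 (P1 x) x > 2 / x * (P2 x - P1 x)"
      using \<delta>[of x] \<open>0 < x\<close> \<open>x < \<delta>\<close> by blast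
  next
    have "((\<lambda>x. (1 - P1 x) / x\<^sup>2 - (1 - P2 x) / x\<^sup>2) \<longlongrightarrow> 1/18 - 1/18) (at_right 0)"
      by (intro tendsto_diff toy_profile_tip_quadratic[OF P1] toy_profile_tip_quadratic[OF P2])
    then show "((\<lambda>x. (P2 x - P1 x) / x\<^sup>2) \<longlongrightarrow> 0) (at_right 0)"
      by (simp add: diff_divide_distrib)
  qed (use \<open>\<delta> > 0\<close> in auto)
  moreover have "P2 (\<delta>/2) < P1 (\<delta>/2)"
    using toy_profile_less[OF P1 P2 \<open>R2 < R1\<close> \<open>\<beta>1 < \<beta>2\<close> g_pos] \<delta>[of "\<delta>/2"] \<open>\<delta> > 0\<close> by auto
  ultimately show False
    by simp
qed

lemma toy_steady_tip_growth_beta_unique: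
  assumes g: "\<And>x. isCont g x" and g_pos: "\<And>v. v > 0 \<Longrightarrow> g v > 0" and g_mono: "mono_on {0<..} g"
    and sol1: "toy_steady_tip_growth g \<beta>1 \<rho>1 r1" "\<beta>1 > 0"
    and sol2: "toy_steady_tip_growth g \<beta>2 \<rho>2 r2" "\<beta>2 > 0"
  shows "\<beta>1 = \<beta>2"
proof -
  obtain R1 P1 R2 P2 where "toy_profile g \<beta>1 R1 P1" "toy_profile g \<beta>2 R2 P2"
    using toy_steady_tip_growth_profile[OF sol1(1) g] toy_steady_tip_growth_profile[OF sol2(1) g] .
  then have "\<not> \<beta>1 < \<beta>2" "\<not> \<beta>2 < \<beta>1"
    using toy_profile_beta_unique[OF _ _ _ _ g_pos g_mono] sol1(2) sol2(2) by metis+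
  then show ?thesis
    by simp
qed

text \<open>Only continuity, positivity and monotonicity of \<open>g\<close> enter the uniqueness argument.\<close>
theorem theorem3p2:
  fixes g :: "real \<Rightarrow> real"
  assumes "real_analytic_on g UNIV"
    and "\<And>v. v > 0 \<Longrightarrow> g v > 0"
    and "\<And>v. v > 0 \<Longrightarrow> deriv g v \<ge> 0"
    and "\<And>v. v > 0 \<Longrightarrow> deriv (deriv (\<lambda>w. w\<^sup>2 * g (w\<^sup>2))) v > 0"
    and "filterlim (\<lambda>v. v * g (v\<^sup>2)) at_top at_top"
  shows "closedin (top_of_set {0<..})
           {\<beta>::real. \<beta> > 0 \<and> (\<exists>\<rho> r. toy_steady_tip_growth g \<beta> \<rho> r)}
       \<and> interior {\<beta>::real. \<beta> > 0 \<and> (\<exists>\<rho> r. toy_steady_tip_growth g \<beta> \<rho> r)} = {}"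
proof (rule subsingleton_closedin_interior_empty)
  have g_deriv: "(g has_real_derivative deriv g x) (at x)" for x
    using assms(1) by (rule real_analytic_on_has_real_derivative) simp
  then have g_cont: "isCont g x" for x
    by (rule DERIV_isCont)
  have g_mono: "mono_on {0<..} g"
    by (intro mono_onI deriv_nonneg_imp_mono[OF g_deriv]) (use assms(3) in auto)
  show "\<beta>1 = \<beta>2"
    if "\<beta>1 \<in> {\<beta>. \<beta> > 0 \<and> (\<exists>\<rho> r. toy_steady_tip_growth g \<beta> \<rho> r)}"
      "\<beta>2 \<in> {\<beta>. \<beta> > 0 \<and> (\<exists>\<rho> r. toy_steady_tip_growth g \<beta> \<rho> r)}" for \<beta>1 \<beta>2
    using that toy_steady_tip_growth_beta_unique[OF g_cont assms(2) g_mono] by blast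
qed auto

end
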